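(* Let $N\in\mathbb{N}$ and $\alpha,\beta>-1$, and let $z_1\le\dots\le z_N$ be the ordered zeros of the Jacobi polynomial $P_N^{(\alpha,\beta)}$. Define the $N\times N$ matrix $S=(s_{i,j})$ by $$s_{j,j}=\sum_{l=1,\,l\ne j}^N\frac{1}{(z_j-z_l)^2}+\frac{\alpha+1}{2}\frac{1}{(1-z_j)^2}+\frac{\beta+1}{2}\frac{1}{(1+z_j)^2},\qquad s_{i,j}=\frac{-1}{(z_i-z_j)^2}\ (i\ne j).$$ Then $$\det(S)=\frac{N!}{2^{3N}}\,\frac{\bigl((N+\alpha+\beta+1)_N\bigr)^3}{(\alpha+1)_N(\beta+1)_N}.$$
   Context: $P_N^{(\alpha,\beta)}$ denotes the classical Jacobi polynomial of degree $N$, orthogonal on $]-1,1[$ with respect to the weight $(1-x)^\alpha(1+x)^\beta$; its zeros are simple and lie in $]-1,1[$. $(x)_N:=x(x+1)\cdots(x+N-1)$ is the Pochhammer symbol. *)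

theory Defs
  imports Complex_Main "Jordan_Normal_Form.Determinant"
begin

text \<open>Classical Jacobi polynomial P_N^(a,b)(x), via the standard hypergeometric
  representation
  P_N(x) = (a+1)_N / N! * sum_{k=0}^N (-N)_k (N+a+b+1)_k / ((a+1)_k k!) ((1-x)/2)^k.\<close>
definition jacobiP :: "nat \<Rightarrow> real \<Rightarrow> real \<Rightarrow> real \<Rightarrow> real" where
  "jacobiP N a b x =
     pochhammer (a + 1) N / fact N *
     (\<Sum>k=0..N. pochhammer (- real N) k * pochhammer (real N + a + b + 1) k
                 / (pochhammer (a + 1) k * fact k) * ((1 - x) / 2) ^ k)"

text \<open>The matrix S, indexed 0..N-1, built from zeros z 0 < ... < z (N-1).\<close>
definition S_matrix :: "nat \<Rightarrow> real \<Rightarrow> real \<Rightarrow> (nat \<Rightarrow> real) \<Rightarrow> real mat" where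
  "S_matrix N a b z = mat N N (\<lambda>(i, j).
     if i = j then
       (\<Sum>l\<in>{0..<N} - {j}. 1 / (z j - z l)^2)
       + (a + 1) / 2 * (1 / (1 - z j)^2) + (b + 1) / 2 * (1 / (1 + z j)^2)
     else - 1 / (z i - z j)^2)"

end

theory Submission
  imports Defs "HOL-Computational_Algebra.Polynomial" "HOL-Computational_Algebra.Formal_Power_Series"
begin

text \<open>Let \<open>V = (z\<^sub>j\<^sup>k)\<close> be the Vandermonde matrix of the zeros and \<open>D = diag(1 - z\<^sub>j\<^sup>2)\<close>.
  At a zero \<open>z\<^sub>j\<close> the hypergeometric differential equation of \<open>P\<^sub>N\<close> gives the Stieltjes relation
  \<open>(1 - z\<^sub>j\<^sup>2) \<Sum>\<^sub>l\<^sub>\<noteq>\<^sub>j 1/(z\<^sub>j - z\<^sub>l) = (\<alpha> - \<beta> + (\<alpha> + \<beta> + 2) z\<^sub>j)/2\<close>.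
  With it, applying \<open>S\<close> to the column \<open>((1 - z\<^sub>i\<^sup>2) z\<^sub>i\<^sup>k)\<^sub>i\<close> yields the values at the zeros of a
  polynomial of degree \<open>k\<close> with leading coefficient \<open>(k + 1)(2N + \<alpha> + \<beta> - k)/2\<close>, so
  \<open>S D V = V U\<close> with \<open>U\<close> upper triangular and
  \<open>det S \<Prod>\<^sub>j (1 - z\<^sub>j\<^sup>2) = N! (N + \<alpha> + \<beta> + 1)\<^sub>N / 2\<^sup>N\<close>.
  Finally, factoring \<open>P\<^sub>N\<close> over its zeros expresses \<open>\<Prod>\<^sub>j (1 - z\<^sub>j\<^sup>2)\<close> through \<open>P\<^sub>N(1)\<close>, \<open>P\<^sub>N(-1)\<close> and
  the leading coefficient of \<open>P\<^sub>N\<close>; \<open>P\<^sub>N(-1)\<close> is evaluated by the Chu--Vandermonde identity.\<close>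

section \<open>Divided differences of powers\<close>

definition power_quot_poly :: "nat \<Rightarrow> 'a::comm_ring_1 \<Rightarrow> 'a poly" where
  "power_quot_poly m y = (\<Sum>i<m. monom (y ^ (m - Suc i)) i)"

fun power_rem_poly :: "nat \<Rightarrow> 'a::comm_ring_1 \<Rightarrow> 'a poly" where
  "power_rem_poly 0 y = 0"
| "power_rem_poly (Suc m) y = pCons 0 (power_rem_poly m y) + power_quot_poly m y"

lemma poly_power_quot_poly: "poly (power_quot_poly m y) x * (x - y) = x ^ m - y ^ m"
  unfolding power_quot_poly_def by (simp add: poly_sum poly_monom power_diff_sumr2 mult.commute)

lemma poly_power_quot_poly_diag: "poly (power_quot_poly m x) x = of_nat m * x ^ (m - 1)"
  unfolding power_quot_poly_def by (simp add: poly_sum poly_monom power_add[symmetric])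

lemma coeff_power_quot_poly: "coeff (power_quot_poly m y) n = (if n < m then y ^ (m - Suc n) else 0)"
  unfolding power_quot_poly_def by (simp add: coeff_sum)

lemma power_diff_eq_power_rem_poly:
  "x ^ m - y ^ m = of_nat m * x ^ (m - 1) * (x - y) - poly (power_rem_poly m y) x * (x - y)\<^sup>2"
proof (induction m)
  case 0
  then show ?case by simp
next
  case (Suc m)
  have "x ^ Suc m - y ^ Suc m = x * (x ^ m - y ^ m) + (x ^ m - poly (power_quot_poly m y) x * (x - y)) * (x - y)"
    by (subst poly_power_quot_poly) (simp add: algebra_simps)
  also have "\<dots> = x * (of_nat m * x ^ (m - 1) * (x - y) - poly (power_rem_poly m y) x * (x - y)\<^sup>2)
      + (x ^ m - poly (power_quot_poly m y) x * (x - y)) * (x - y)"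
    by (simp only: Suc.IH)
  also have "\<dots> = of_nat (Suc m) * x ^ m * (x - y) - poly (power_rem_poly (Suc m) y) x * (x - y)\<^sup>2"
    by (cases m) (simp_all add: algebra_simps power2_eq_square)
  finally show ?case by simp
qed

lemma coeff_power_rem_poly_eq_0: "m < n + 2 \<Longrightarrow> coeff (power_rem_poly m y) n = 0"
  by (induction m arbitrary: n) (auto simp: coeff_power_quot_poly coeff_pCons split: nat.split)

lemma coeff_power_rem_poly_top: "coeff (power_rem_poly (n + 2) y) n = of_nat (n + 1)"
  by (induction n) (simp_all add: coeff_power_quot_poly coeff_pCons numeral_2_eq_2)

lemma poly_power_rem_poly_diag:
  fixes x :: "'a::field_char_0"
  shows "poly (power_rem_poly m x) x = of_nat m * (of_nat m - 1) / 2 * x ^ (m - 2)"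
proof (induction m)
  case 0
  then show ?case by simp
next
  case (Suc m)
  have "poly (power_rem_poly (Suc m) x) x = x * (of_nat m * (of_nat m - 1) / 2 * x ^ (m - 2)) + of_nat m * x ^ (m - 1)"
    by (simp add: poly_power_quot_poly_diag Suc.IH)
  also have "\<dots> = of_nat (Suc m) * (of_nat (Suc m) - 1) / 2 * x ^ (Suc m - 2)"
  proof (cases m)
    case (Suc n)
    then show ?thesis
      by (cases n) (simp_all add: field_simps)
  qed simp
  finally show ?case .
qed

lemma power_diff_divide_square:
  fixes x y :: "'a::field"
  assumes "x \<noteq> y"
  shows "(x ^ m - y ^ m) / (x - y)\<^sup>2 = of_nat m * x ^ (m - 1) / (x - y) - poly (power_rem_poly m y) x"
proof -
  have "(c * d - r * d\<^sup>2) / d\<^sup>2 = c / d - r" if "d \<noteq> 0" for c r d :: 'a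
    using that by (simp add: field_simps power2_eq_square)
  then show ?thesis
    using assms by (subst power_diff_eq_power_rem_poly) simp
qed

section \<open>The matrix identity \<open>S D V = V U\<close>\<close>

definition endpoint_weight :: "real \<Rightarrow> real \<Rightarrow> real \<Rightarrow> real" where
  "endpoint_weight a b x = (a + 1) / 2 * (1 / (1 - x)\<^sup>2) + (b + 1) / 2 * (1 / (1 + x)\<^sup>2)"

lemma S_matrix_row_sum:
  assumes j: "j < N"
  shows "(\<Sum>i<N. S_matrix N a b z $$ (j, i) * g (z i)) =
     (\<Sum>i\<in>{0..<N} - {j}. (g (z j) - g (z i)) / (z j - z i)\<^sup>2) + endpoint_weight a b (z j) * g (z j)"
proof -
  let ?I = "{0..<N} - {j}"
  have "(\<Sum>i<N. S_matrix N a b z $$ (j, i) * g (z i))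
      = S_matrix N a b z $$ (j, j) * g (z j) + (\<Sum>i\<in>?I. S_matrix N a b z $$ (j, i) * g (z i))"
    using j by (simp add: lessThan_atLeast0 sum.remove[of _ j])
  also have "(\<Sum>i\<in>?I. S_matrix N a b z $$ (j, i) * g (z i)) = (\<Sum>i\<in>?I. - g (z i) / (z j - z i)\<^sup>2)"
    using j by (intro sum.cong) (auto simp: S_matrix_def)
  also have "S_matrix N a b z $$ (j, j) = (\<Sum>i\<in>?I. 1 / (z j - z i)\<^sup>2) + endpoint_weight a b (z j)"
    using j by (simp add: S_matrix_def endpoint_weight_def)
  finally show ?thesis
    by (simp add: diff_divide_distrib sum_subtractf sum_distrib_left sum_negf algebra_simps)
qed

text \<open>This is where the Stieltjes relation enters: it absorbs the endpoint weights.\<close>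

lemma stieltjes_row_identity:
  fixes a b x s :: real
  assumes x: "x \<noteq> 1" "x \<noteq> -1" and st: "(1 - x\<^sup>2) * s = ((a - b) + (a + b + 2) * x) / 2"
  shows "(of_nat k * x ^ (k - 1) - (of_nat k + 2) * x ^ (k + 1)) * s
      + endpoint_weight a b x * (x ^ k - x ^ (k + 2))
     = of_nat k * x ^ (k - 1) * (((a - b) + (a + b + 2) * x) / 2) + x ^ k * ((a + b + 2) / 2)"
proof -
  define u v where "u = 1 - x" and "v = 1 + x"
  have "u \<noteq> 0" "v \<noteq> 0" "1 - x\<^sup>2 = u * v"
    using x by (auto simp: u_def v_def algebra_simps power2_eq_square)
  moreover have "u * v * s = ((a - b) + (a + b + 2) * x) / 2"
    using st unfolding \<open>1 - x\<^sup>2 = u * v\<close> .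
  ultimately have "s = ((a - b) + (a + b + 2) * x) / (2 * u * v)"
    by (simp add: field_simps)
  have "endpoint_weight a b x * (1 - x\<^sup>2) = (a + 1) / 2 * (v / u) + (b + 1) / 2 * (u / v)"
    unfolding endpoint_weight_def \<open>1 - x\<^sup>2 = u * v\<close> u_def[symmetric] v_def[symmetric]
    using \<open>u \<noteq> 0\<close> \<open>v \<noteq> 0\<close> by (simp add: field_simps power2_eq_square)
  then have base: "- 2 * x * s + endpoint_weight a b x * (1 - x\<^sup>2) = (a + b + 2) / 2"
    unfolding \<open>s = _\<close> using \<open>u \<noteq> 0\<close> \<open>v \<noteq> 0\<close>
    by (simp add: field_simps) (simp add: u_def v_def algebra_simps)
  have "of_nat k * x ^ (k - 1) * x\<^sup>2 = of_nat k * x ^ (k + 1)"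
    by (cases k) (auto simp: power2_eq_square)
  then have "(of_nat k * x ^ (k - 1) - (of_nat k + 2) * x ^ (k + 1)) * s
      + endpoint_weight a b x * (x ^ k - x ^ (k + 2))
    = of_nat k * x ^ (k - 1) * ((1 - x\<^sup>2) * s) + x ^ k * (- 2 * x * s + endpoint_weight a b x * (1 - x\<^sup>2))"
    by (simp add: algebra_simps power2_eq_square)
  then show ?thesis
    unfolding st base .
qed

text \<open>The first two terms of \<open>U_poly\<close> come from \<open>stieltjes_row_identity\<close>, the sum from the
  divided differences \<open>(z\<^sub>j\<^sup>m - z\<^sub>i\<^sup>m)/(z\<^sub>j - z\<^sub>i)\<^sup>2\<close> of \<open>power_diff_divide_square\<close> over all \<open>i\<close>, and the
  last two monomials cancel its spurious term \<open>i = j\<close> (\<open>poly_power_rem_poly_diag\<close>).\<close>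

definition U_poly :: "nat \<Rightarrow> real \<Rightarrow> real \<Rightarrow> (nat \<Rightarrow> real) \<Rightarrow> nat \<Rightarrow> real poly" where
  "U_poly N a b z k =
     smult (of_nat k) (monom 1 (k - 1) * [:(a - b) / 2, (a + b + 2) / 2:]) + monom ((a + b + 2) / 2) k
     - (\<Sum>i<N. power_rem_poly k (z i) - power_rem_poly (k + 2) (z i))
     + monom (of_nat k * (of_nat k - 1) / 2) (k - 2) - monom ((of_nat k + 2) * (of_nat k + 1) / 2) k"

lemma poly_U_poly:
  "poly (U_poly N a b z k) x =
     of_nat k * x ^ (k - 1) * (((a - b) + (a + b + 2) * x) / 2) + x ^ k * ((a + b + 2) / 2)
     - (\<Sum>i<N. poly (power_rem_poly k (z i)) x - poly (power_rem_poly (k + 2) (z i)) x)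
     + poly (power_rem_poly k x) x - poly (power_rem_poly (k + 2) x) x"
  unfolding U_poly_def poly_power_rem_poly_diag
  by (simp add: poly_sum poly_monom) (simp add: field_simps)

lemma S_matrix_mult_column:
  assumes inj: "inj_on z {0..<N}" and j: "j < N" and x: "z j \<noteq> 1" "z j \<noteq> -1"
    and st: "(1 - z j ^ 2) * (\<Sum>l\<in>{0..<N} - {j}. 1 / (z j - z l)) = ((a - b) + (a + b + 2) * z j) / 2"
  shows "(\<Sum>i<N. S_matrix N a b z $$ (j, i) * ((1 - z i ^ 2) * z i ^ k)) = poly (U_poly N a b z k) (z j)"
proof -
  let ?I = "{0..<N} - {j}"
  define g where "g x = x ^ k - x ^ (k + 2)" for x :: real
  define c where "c = of_nat k * z j ^ (k - 1) - (of_nat k + 2) * z j ^ (k + 1)"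
  define F where "F i = poly (power_rem_poly k (z i)) (z j) - poly (power_rem_poly (k + 2) (z i)) (z j)" for i
  have "(1 - x\<^sup>2) * x ^ k = g x" for x :: real
    unfolding g_def by (simp add: algebra_simps power_add power2_eq_square)
  then have "(\<Sum>i<N. S_matrix N a b z $$ (j, i) * ((1 - z i ^ 2) * z i ^ k))
      = (\<Sum>i\<in>?I. (g (z j) - g (z i)) / (z j - z i)\<^sup>2) + endpoint_weight a b (z j) * g (z j)"
    using S_matrix_row_sum[OF j] by simp
  also have "(\<Sum>i\<in>?I. (g (z j) - g (z i)) / (z j - z i)\<^sup>2) = (\<Sum>i\<in>?I. c * (1 / (z j - z i)) - F i)"
  proof (rule sum.cong)
    fix i
    assume "i \<in> ?I"
    then have "z j \<noteq> z i"
      using inj j by (auto dest: inj_onD)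
    have "(g (z j) - g (z i)) / (z j - z i)\<^sup>2
        = (z j ^ k - z i ^ k) / (z j - z i)\<^sup>2 - (z j ^ (k + 2) - z i ^ (k + 2)) / (z j - z i)\<^sup>2"
      unfolding g_def by (simp add: diff_divide_distrib[symmetric] algebra_simps)
    also have "\<dots> = c * (1 / (z j - z i)) - F i"
      unfolding power_diff_divide_square[OF \<open>z j \<noteq> z i\<close>] c_def F_def
      by (simp add: diff_divide_distrib left_diff_distrib)
    finally show "(g (z j) - g (z i)) / (z j - z i)\<^sup>2 = c * (1 / (z j - z i)) - F i" .
  qed simp
  also have "\<dots> = c * (\<Sum>i\<in>?I. 1 / (z j - z i)) - ((\<Sum>i<N. F i) - F j)"
    using j by (simp add: sum_subtractf sum_distrib_left lessThan_atLeast0 sum.remove[of _ j])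
  finally show ?thesis
    using stieltjes_row_identity[OF x st, of k] unfolding poly_U_poly F_def c_def g_def by simp
qed

lemma coeff_U_poly_eq_0:
  assumes "k < m"
  shows "coeff (U_poly N a b z k) m = 0"
proof -
  have "coeff (smult (of_nat k) (monom 1 (k - 1) * [:(a - b) / 2, (a + b + 2) / 2:])) m = 0"
    using assms by (cases k) (auto simp: coeff_monom_mult coeff_pCons split: nat.split)
  moreover have "coeff (power_rem_poly k (z i) - power_rem_poly (k + 2) (z i)) m = 0" for i
    using assms by (simp only: coeff_diff) (simp add: coeff_power_rem_poly_eq_0 del: power_rem_poly.simps)
  ultimately show ?thesis
    using assms unfolding U_poly_def by (simp add: coeff_monom coeff_sum del: power_rem_poly.simps)
qed

lemma degree_U_poly: "degree (U_poly N a b z k) \<le> k"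
  by (rule degree_le) (auto simp: coeff_U_poly_eq_0)

lemma coeff_U_poly_top:
  "coeff (U_poly N a b z k) k = (of_nat k + 1) * (2 * of_nat N + a + b - of_nat k) / 2"
proof -
  have linear: "coeff (smult (of_nat k) (monom 1 (k - 1) * [:(a - b) / 2, (a + b + 2) / 2:])) k
      = of_nat k * ((a + b + 2) / 2)"
    by (cases k) (auto simp: coeff_monom_mult)
  have rem: "coeff (power_rem_poly k y) k = 0" for y :: real
    by (simp add: coeff_power_rem_poly_eq_0)
  have "coeff (monom (of_nat k * (of_nat k - 1) / 2) (k - 2)) k = (0::real)"
    by (cases k) (auto simp: coeff_monom)
  then show ?thesis
    unfolding U_poly_def
    by (simp only: coeff_diff coeff_add coeff_sum linear rem coeff_power_rem_poly_top)
      (simp add: field_simps)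
qed

definition vandermonde_mat :: "nat \<Rightarrow> (nat \<Rightarrow> 'a::comm_ring_1) \<Rightarrow> 'a mat" where
  "vandermonde_mat n z = mat n n (\<lambda>(j, k). z j ^ k)"

lemma det_vandermonde_mat_nonzero:
  fixes z :: "nat \<Rightarrow> 'a::field"
  assumes inj: "inj_on z {0..<n}"
  shows "det (vandermonde_mat n z) \<noteq> 0"
proof
  assume "det (vandermonde_mat n z) = 0"
  then obtain v where v: "v \<in> carrier_vec n" "v \<noteq> 0\<^sub>v n" "vandermonde_mat n z *\<^sub>v v = 0\<^sub>v n"
    using det_0_iff_vec_prod_zero[of "vandermonde_mat n z" n] by (auto simp: vandermonde_mat_def)
  define p where "p = (\<Sum>k<n. monom (v $ k) k)"
  have coeff_p: "coeff p i = (if i < n then v $ i else 0)" for i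
    unfolding p_def by (simp add: coeff_sum coeff_monom)
  have "poly p (z j) = (vandermonde_mat n z *\<^sub>v v) $ j" if "j < n" for j
    using that v(1) unfolding p_def vandermonde_mat_def
    by (simp add: poly_sum poly_monom scalar_prod_def lessThan_atLeast0 mult.commute)
  then have "poly p x = poly 0 x" if "x \<in> z ` {0..<n}" for x
    using that v(3) by auto
  moreover have "degree p < n"
  proof (cases n)
    case (Suc m)
    then have "degree p \<le> m"
      by (intro degree_le) (auto simp: coeff_p)
    then show ?thesis
      using Suc by simp
  qed (use v in auto)
  ultimately have "p = 0"
    using inj by (intro poly_eqI_degree[of "z ` {0..<n}"]) (auto simp: card_image)
  then have "v $ i = 0" if "i < n" for i
    using coeff_p[of i] that by simp
  then have "v = 0\<^sub>v n"
    using v(1) by (intro eq_vecI) auto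
  with v(2) show False ..
qed

lemma det_mat_diag: "det (mat_diag n f) = (\<Prod>i<n. f i)"
proof -
  have "upper_triangular (mat_diag n f)"
    by (auto simp: upper_triangular_def mat_diag_def)
  then show ?thesis
    by (simp add: det_upper_triangular[of _ n] prod_list_diag_prod lessThan_atLeast0 mat_diag_def)
qed

lemma poly_eq_sum_coeff_lessThan:
  fixes x :: "'a::{comm_semiring_0,semiring_1}"
  assumes "degree p < n"
  shows "poly p x = (\<Sum>i<n. coeff p i * x ^ i)"
proof -
  have "poly p x = (\<Sum>i\<le>degree p. coeff p i * x ^ i)"
    by (rule poly_altdef)
  also have "\<dots> = (\<Sum>i<n. coeff p i * x ^ i)"
    using assms by (intro sum.mono_neutral_left) (auto simp: coeff_eq_0)
  finally show ?thesis .
qed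

lemma S_matrix_mult_diag_vandermonde:
  assumes inj: "inj_on z {0..<N}" and x: "\<And>j. j < N \<Longrightarrow> z j \<noteq> 1 \<and> z j \<noteq> -1"
    and st: "\<And>j. j < N \<Longrightarrow>
      (1 - z j ^ 2) * (\<Sum>l\<in>{0..<N} - {j}. 1 / (z j - z l)) = ((a - b) + (a + b + 2) * z j) / 2"
  shows "S_matrix N a b z * (mat_diag N (\<lambda>i. 1 - z i ^ 2) * vandermonde_mat N z)
       = vandermonde_mat N z * mat N N (\<lambda>(m, k). coeff (U_poly N a b z k) m)"
proof (rule eq_matI)
  fix j k
  assume "j < dim_row (vandermonde_mat N z * mat N N (\<lambda>(m, k). coeff (U_poly N a b z k) m))"
    and "k < dim_col (vandermonde_mat N z * mat N N (\<lambda>(m, k). coeff (U_poly N a b z k) m))"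
  then have j: "j < N" and k: "k < N"
    by (simp_all add: vandermonde_mat_def)
  have "(S_matrix N a b z * (mat_diag N (\<lambda>i. 1 - z i ^ 2) * vandermonde_mat N z)) $$ (j, k)
      = (\<Sum>i<N. S_matrix N a b z $$ (j, i) * ((1 - z i ^ 2) * z i ^ k))"
    using j k by (simp add: mat_diag_mult_left[of _ N N] vandermonde_mat_def S_matrix_def
        scalar_prod_def lessThan_atLeast0)
  also have "\<dots> = poly (U_poly N a b z k) (z j)"
    using x[OF j] by (intro S_matrix_mult_column[OF inj j _ _ st[OF j]]) auto
  also have "\<dots> = (\<Sum>m<N. coeff (U_poly N a b z k) m * z j ^ m)"
    by (rule poly_eq_sum_coeff_lessThan) (use degree_U_poly[of N a b z k] k in linarith)
  also have "\<dots> = (vandermonde_mat N z * mat N N (\<lambda>(m, k). coeff (U_poly N a b z k) m)) $$ (j, k)"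
    using j k by (simp add: vandermonde_mat_def scalar_prod_def lessThan_atLeast0 mult.commute)
  finally show "(S_matrix N a b z * (mat_diag N (\<lambda>i. 1 - z i ^ 2) * vandermonde_mat N z)) $$ (j, k)
      = (vandermonde_mat N z * mat N N (\<lambda>(m, k). coeff (U_poly N a b z k) m)) $$ (j, k)" .
qed (simp_all add: vandermonde_mat_def S_matrix_def)

lemma prod_descending_pochhammer:
  fixes y :: "'a::comm_ring_1"
  shows "(\<Prod>k<n. y - of_nat k) = pochhammer (y - of_nat n + 1) n"
  by (induction n) (simp_all add: pochhammer_rec algebra_simps)

lemma det_S_matrix_mult_prod:
  assumes inj: "inj_on z {0..<N}" and x: "\<And>j. j < N \<Longrightarrow> z j \<noteq> 1 \<and> z j \<noteq> -1"
    and st: "\<And>j. j < N \<Longrightarrow>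
      (1 - z j ^ 2) * (\<Sum>l\<in>{0..<N} - {j}. 1 / (z j - z l)) = ((a - b) + (a + b + 2) * z j) / 2"
  shows "det (S_matrix N a b z) * (\<Prod>i<N. 1 - z i ^ 2)
       = fact N * pochhammer (real N + a + b + 1) N / 2 ^ N"
proof -
  define V where "V = vandermonde_mat N z"
  define D where "D = mat_diag N (\<lambda>i. 1 - z i ^ 2)"
  define U where "U = mat N N (\<lambda>(m, k). coeff (U_poly N a b z k) m)"
  have carrier: "V \<in> carrier_mat N N" "D \<in> carrier_mat N N" "U \<in> carrier_mat N N"
      "S_matrix N a b z \<in> carrier_mat N N"
    by (simp_all add: V_def D_def U_def vandermonde_mat_def S_matrix_def)
  have "upper_triangular U"
    by (auto simp: U_def upper_triangular_def coeff_U_poly_eq_0)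
  then have "det U = (\<Prod>k<N. (of_nat k + 1) * (2 * of_nat N + a + b - of_nat k) / 2)"
    by (simp add: det_upper_triangular[of _ N] prod_list_diag_prod lessThan_atLeast0 U_def
        coeff_U_poly_top)
  also have "\<dots> = fact N * pochhammer (real N + a + b + 1) N / 2 ^ N"
  proof -
    have "(\<Prod>k<N. of_nat k + 1 :: real) = fact N"
      by (simp add: fact_prod_Suc lessThan_atLeast0 add.commute)
    moreover have "(\<Prod>k<N. 2 * real N + a + b - of_nat k) = pochhammer (real N + a + b + 1) N"
      using prod_descending_pochhammer[where n = N and y = "2 * real N + a + b"] by (simp add: add.assoc)
    ultimately show ?thesis
      by (simp add: prod.distrib prod_dividef)
  qed
  finally have det_U: "det U = fact N * pochhammer (real N + a + b + 1) N / 2 ^ N" .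
  have "det (S_matrix N a b z) * (det D * det V) = det V * det U"
    using S_matrix_mult_diag_vandermonde[OF inj x st] carrier
    by (metis D_def U_def V_def det_mult mult_carrier_mat)
  then have "det (S_matrix N a b z) * det D * det V = det U * det V"
    by (simp add: ac_simps)
  moreover have "det V \<noteq> 0"
    unfolding V_def using inj by (rule det_vandermonde_mat_nonzero)
  ultimately have "det (S_matrix N a b z) * det D = det U"
    by simp
  then show ?thesis
    unfolding det_U D_def det_mat_diag .
qed

section \<open>The hypergeometric form of the Jacobi polynomial\<close>

definition jacobi_coeff :: "nat \<Rightarrow> real \<Rightarrow> real \<Rightarrow> nat \<Rightarrow> real" where
  "jacobi_coeff N a b k =
     pochhammer (- real N) k * pochhammer (real N + a + b + 1) k / (pochhammer (a + 1) k * fact k)"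

definition jacobi_hyp_poly :: "nat \<Rightarrow> real \<Rightarrow> real \<Rightarrow> real poly" where
  "jacobi_hyp_poly N a b = (\<Sum>k\<le>N. monom (jacobi_coeff N a b k) k)"

lemma poly_jacobi_hyp_poly: "poly (jacobi_hyp_poly N a b) t = (\<Sum>k\<le>N. jacobi_coeff N a b k * t ^ k)"
  unfolding jacobi_hyp_poly_def by (simp add: poly_sum poly_monom)

lemma coeff_jacobi_hyp_poly: "coeff (jacobi_hyp_poly N a b) k = (if k \<le> N then jacobi_coeff N a b k else 0)"
  unfolding jacobi_hyp_poly_def by (simp add: coeff_sum coeff_monom)

lemma degree_jacobi_hyp_poly: "degree (jacobi_hyp_poly N a b) \<le> N"
  by (rule degree_le) (simp add: coeff_jacobi_hyp_poly)

lemma jacobiP_eq_poly_jacobi_hyp_poly: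
  "jacobiP N a b x = pochhammer (a + 1) N / fact N * poly (jacobi_hyp_poly N a b) ((1 - x) / 2)"
  unfolding jacobiP_def poly_jacobi_hyp_poly jacobi_coeff_def by (simp add: atLeast0AtMost)

lemma jacobi_coeff_top:
  "jacobi_coeff N a b N = (-1) ^ N * pochhammer (real N + a + b + 1) N / pochhammer (a + 1) N"
proof -
  have "pochhammer (- real N) N = (-1) ^ N * fact N"
    by (simp add: pochhammer_minus pochhammer_fact)
  then show ?thesis
    by (simp add: jacobi_coeff_def)
qed

lemma jacobi_coeff_Suc:
  assumes "a > -1"
  shows "(of_nat k + 1) * (of_nat k + 1 + a) * jacobi_coeff N a b (Suc k)
       = (of_nat k - of_nat N) * (of_nat k + of_nat N + a + b + 1) * jacobi_coeff N a b k"
proof -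
  have "pochhammer (a + 1) k * fact k \<noteq> 0" "of_nat k + 1 + a \<noteq> 0"
    using assms pochhammer_pos[of "a + 1" k] by auto
  then show ?thesis
    unfolding jacobi_coeff_def pochhammer_Suc fact_Suc
    by (simp add: divide_simps) (simp add: algebra_simps)
qed

lemma jacobi_hyp_poly_ode:
  assumes "a > -1"
  shows "t * (1 - t) * poly (pderiv (pderiv (jacobi_hyp_poly N a b))) t
       + ((a + 1) - (a + b + 2) * t) * poly (pderiv (jacobi_hyp_poly N a b)) t
       + of_nat N * (of_nat N + a + b + 1) * poly (jacobi_hyp_poly N a b) t = 0"
proof -
  let ?c = "jacobi_coeff N a b"
  have pderiv_sum: "pderiv (sum f A) = (\<Sum>x\<in>A. pderiv (f x))" for f :: "nat \<Rightarrow> real poly" and A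
    using higher_pderiv_sum[of 1 f A] by simp
  have d1: "pderiv (jacobi_hyp_poly N a b) = (\<Sum>k\<le>N. monom (of_nat k * ?c k) (k - 1))"
    unfolding jacobi_hyp_poly_def by (simp add: pderiv_sum pderiv_monom)
  have d2: "pderiv (pderiv (jacobi_hyp_poly N a b))
      = (\<Sum>k\<le>N. monom (of_nat (k - 1) * (of_nat k * ?c k)) (k - 1 - 1))"
    unfolding d1 by (simp add: pderiv_sum pderiv_monom)
  have summand: "t * (1 - t) * (of_nat (k - 1) * (of_nat k * ?c k) * t ^ (k - 1 - 1))
      + ((a + 1) - (a + b + 2) * t) * (of_nat k * ?c k * t ^ (k - 1))
      + of_nat N * (of_nat N + a + b + 1) * (?c k * t ^ k)
      = of_nat k * (of_nat k + a) * ?c k * t ^ (k - 1)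
        - (of_nat k - of_nat N) * (of_nat k + of_nat N + a + b + 1) * ?c k * t ^ k" for k
    by (cases k; cases "k - 1") (simp_all add: algebra_simps)
  have "t * (1 - t) * poly (pderiv (pderiv (jacobi_hyp_poly N a b))) t
       + ((a + 1) - (a + b + 2) * t) * poly (pderiv (jacobi_hyp_poly N a b)) t
       + of_nat N * (of_nat N + a + b + 1) * poly (jacobi_hyp_poly N a b) t
     = (\<Sum>k\<le>N. t * (1 - t) * (of_nat (k - 1) * (of_nat k * ?c k) * t ^ (k - 1 - 1))
        + ((a + 1) - (a + b + 2) * t) * (of_nat k * ?c k * t ^ (k - 1))
        + of_nat N * (of_nat N + a + b + 1) * (?c k * t ^ k))"
    unfolding d2 unfolding d1 poly_jacobi_hyp_poly
    by (simp add: poly_sum poly_monom sum_distrib_left sum.distrib)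
  also have "\<dots> = (\<Sum>k\<le>N. of_nat k * (of_nat k + a) * ?c k * t ^ (k - 1))
       - (\<Sum>k\<le>N. (of_nat k - of_nat N) * (of_nat k + of_nat N + a + b + 1) * ?c k * t ^ k)"
    by (simp only: summand sum_subtractf)
  also have "(\<Sum>k\<le>N. of_nat k * (of_nat k + a) * ?c k * t ^ (k - 1))
      = (\<Sum>k<N. (of_nat k + 1) * (of_nat k + 1 + a) * ?c (Suc k) * t ^ k)"
    by (subst sum.atMost_shift) (simp add: algebra_simps)
  also have "\<dots> = (\<Sum>k\<le>N. (of_nat k - of_nat N) * (of_nat k + of_nat N + a + b + 1) * ?c k * t ^ k)"
    using jacobi_coeff_Suc[OF assms] by (simp add: lessThan_Suc_atMost[symmetric])
  finally show ?thesis
    by simp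
qed

lemma poly_jacobi_hyp_poly_0: "poly (jacobi_hyp_poly N a b) 0 = 1"
  by (simp add: poly_jacobi_hyp_poly jacobi_coeff_def atMost_atLeast0 sum.atLeast_Suc_atMost zero_power)

lemma poly_jacobi_hyp_poly_1:
  assumes "a > -1"
  shows "poly (jacobi_hyp_poly N a b) 1 = (-1) ^ N * pochhammer (b + 1) N / pochhammer (a + 1) N"
proof -
  have "poly (jacobi_hyp_poly N a b) 1
      = (\<Sum>k = 0..N. pochhammer (real N + a + b + 1) k * pochhammer (- of_nat N) k
          / (of_nat (fact k) * pochhammer (a + 1) k))"
    by (simp add: poly_jacobi_hyp_poly jacobi_coeff_def atMost_atLeast0 mult.commute)
  also have "\<dots> = pochhammer (- (real N + b)) N / pochhammer (a + 1) N"
    using Vandermonde_pochhammer[where a = "real N + a + b + 1" and c = "a + 1" and n = N] assms by simp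
  also have "pochhammer (- (real N + b)) N = (-1) ^ N * pochhammer (b + 1) N"
    by (simp only: pochhammer_minus) simp
  finally show ?thesis
    by simp
qed

section \<open>Zeros of polynomials satisfying a second order differential equation\<close>

lemma pderiv_linear_factors_at_root:
  fixes \<tau> :: "nat \<Rightarrow> 'a::field"
  assumes inj: "inj_on \<tau> {0..<N}" and j: "j < N"
  defines "R \<equiv> \<Prod>l\<in>{0..<N} - {j}. \<tau> j - \<tau> l"
  shows "poly (pderiv (\<Prod>l<N. [:- \<tau> l, 1:])) (\<tau> j) = R"
    and "poly (pderiv (pderiv (\<Prod>l<N. [:- \<tau> l, 1:]))) (\<tau> j)
          = 2 * R * (\<Sum>l\<in>{0..<N} - {j}. 1 / (\<tau> j - \<tau> l))"
proof -
  let ?I = "{0..<N} - {j}"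
  define f where "f l = [:- \<tau> l, 1:]" for l
  define r where "r = (\<Prod>l\<in>?I. f l)"
  have split: "(\<Prod>l<N. [:- \<tau> l, 1:]) = f j * r"
    unfolding r_def f_def using j by (simp add: lessThan_atLeast0 prod.remove[of "{0..<N}" j])
  have "pderiv (f j) = 1" "poly (f j) (\<tau> j) = 0"
    unfolding f_def by (simp_all add: pderiv_pCons)
  then have d1: "poly (pderiv (f j * r)) (\<tau> j) = poly r (\<tau> j)"
    and d2: "poly (pderiv (pderiv (f j * r))) (\<tau> j) = 2 * poly (pderiv r) (\<tau> j)"
    by (simp_all add: pderiv_mult pderiv_add)
  have "\<tau> j - \<tau> l \<noteq> 0" if "l \<in> ?I" for l
    using that inj j by (auto dest: inj_onD)
  then have "(\<Prod>l\<in>?I - {m}. \<tau> j - \<tau> l) = R * (1 / (\<tau> j - \<tau> m))" if "m \<in> ?I" for m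
    using that unfolding R_def by (simp add: prod.remove[of ?I m] field_simps)
  moreover have "poly (pderiv r) (\<tau> j) = (\<Sum>m\<in>?I. \<Prod>l\<in>?I - {m}. \<tau> j - \<tau> l)"
    unfolding r_def pderiv_prod f_def by (simp add: poly_sum poly_prod pderiv_pCons)
  ultimately have "poly (pderiv r) (\<tau> j) = R * (\<Sum>l\<in>?I. 1 / (\<tau> j - \<tau> l))"
    by (simp add: sum_distrib_left)
  moreover have "poly r (\<tau> j) = R"
    unfolding r_def R_def f_def by (simp add: poly_prod)
  ultimately show "poly (pderiv (\<Prod>l<N. [:- \<tau> l, 1:])) (\<tau> j) = R"
    and "poly (pderiv (pderiv (\<Prod>l<N. [:- \<tau> l, 1:]))) (\<tau> j)
          = 2 * R * (\<Sum>l\<in>{0..<N} - {j}. 1 / (\<tau> j - \<tau> l))"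
    unfolding split d1 d2 by simp_all
qed

lemma linear_factors_ode_at_root:
  fixes \<tau> :: "nat \<Rightarrow> 'a::field"
  assumes p: "p = smult L (\<Prod>l<N. [:- \<tau> l, 1:])" and "L \<noteq> 0"
    and inj: "inj_on \<tau> {0..<N}" and j: "j < N"
    and ode: "A * poly (pderiv (pderiv p)) (\<tau> j) + B * poly (pderiv p) (\<tau> j) + C * poly p (\<tau> j) = 0"
  shows "2 * A * (\<Sum>l\<in>{0..<N} - {j}. 1 / (\<tau> j - \<tau> l)) + B = 0"
proof -
  define R where "R = (\<Prod>l\<in>{0..<N} - {j}. \<tau> j - \<tau> l)"
  have "R \<noteq> 0"
    unfolding R_def using inj j by (auto dest: inj_onD)
  have "poly (\<Prod>l<N. [:- \<tau> l, 1:]) (\<tau> j) = 0"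
    using j by (auto simp: poly_prod)
  with ode have "L * R * (2 * A * (\<Sum>l\<in>{0..<N} - {j}. 1 / (\<tau> j - \<tau> l)) + B) = 0"
    unfolding p pderiv_smult poly_smult pderiv_linear_factors_at_root[OF inj j]
    by (simp add: R_def algebra_simps)
  with \<open>L \<noteq> 0\<close> \<open>R \<noteq> 0\<close> show ?thesis
    by simp
qed

section \<open>Zeros of the Jacobi polynomial\<close>

lemma jacobi_pochhammer_pos:
  assumes "a > -1" "b > -1"
  shows "pochhammer (a + 1) N > 0" and "pochhammer (b + 1) N > 0"
    and "pochhammer (real N + a + b + 1) N > 0"
proof -
  show "pochhammer (a + 1) N > 0" "pochhammer (b + 1) N > 0"
    using assms by (auto intro: pochhammer_pos)
  show "pochhammer (real N + a + b + 1) N > 0"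
    using assms by (cases N) (auto intro: pochhammer_pos)
qed

lemma jacobi_hyp_poly_eq_linear_factors:
  assumes "a > -1" and inj: "inj_on z {0..<N}" and roots: "\<And>j. j < N \<Longrightarrow> jacobiP N a b (z j) = 0"
  shows "jacobi_hyp_poly N a b = smult (jacobi_coeff N a b N) (\<Prod>l<N. [:- ((1 - z l) / 2), 1:])"
proof (rule poly_eqI_degree_lead_coeff[where n = N and A = "(\<lambda>l. (1 - z l) / 2) ` {0..<N}"])
  have "lead_coeff (\<Prod>l<N. [:- ((1 - z l) / 2), 1:]) = 1"
    by (simp add: lead_coeff_prod)
  moreover have "degree (\<Prod>l<N. [:- ((1 - z l) / 2), 1:]) = N"
    by (subst degree_prod_eq_sum_degree) auto
  ultimately show "coeff (jacobi_hyp_poly N a b) N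
      = coeff (smult (jacobi_coeff N a b N) (\<Prod>l<N. [:- ((1 - z l) / 2), 1:])) N"
    and "degree (smult (jacobi_coeff N a b N) (\<Prod>l<N. [:- ((1 - z l) / 2), 1:])) \<le> N"
    by (simp_all add: coeff_jacobi_hyp_poly)
  show "N \<le> card ((\<lambda>l. (1 - z l) / 2) ` {0..<N})"
    using inj by (simp add: card_image inj_on_def)
  show "degree (jacobi_hyp_poly N a b) \<le> N"
    by (rule degree_jacobi_hyp_poly)
  have "pochhammer (a + 1) N \<noteq> 0"
    using assms pochhammer_pos[of "a + 1" N] by auto
  then show "poly (jacobi_hyp_poly N a b) t
      = poly (smult (jacobi_coeff N a b N) (\<Prod>l<N. [:- ((1 - z l) / 2), 1:])) t"
    if "t \<in> (\<lambda>l. (1 - z l) / 2) ` {0..<N}" for t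
    using that roots by (auto simp: jacobiP_eq_poly_jacobi_hyp_poly poly_prod)
qed

lemma jacobi_zeros_stieltjes:
  assumes "a > -1" "b > -1" and inj: "inj_on z {0..<N}"
    and roots: "\<And>j. j < N \<Longrightarrow> jacobiP N a b (z j) = 0" and j: "j < N"
  shows "(1 - z j ^ 2) * (\<Sum>l\<in>{0..<N} - {j}. 1 / (z j - z l)) = ((a - b) + (a + b + 2) * z j) / 2"
proof -
  define \<tau> where "\<tau> l = (1 - z l) / 2" for l
  have "inj_on \<tau> {0..<N}"
    using inj by (auto simp: \<tau>_def inj_on_def)
  moreover have "jacobi_coeff N a b N \<noteq> 0"
    using jacobi_pochhammer_pos[OF assms(1,2), of N] by (simp add: jacobi_coeff_top)
  moreover have "jacobi_hyp_poly N a b = smult (jacobi_coeff N a b N) (\<Prod>l<N. [:- \<tau> l, 1:])"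
    using jacobi_hyp_poly_eq_linear_factors[OF assms(1) inj roots] by (simp add: \<tau>_def)
  ultimately have "2 * (\<tau> j * (1 - \<tau> j)) * (\<Sum>l\<in>{0..<N} - {j}. 1 / (\<tau> j - \<tau> l))
      + ((a + 1) - (a + b + 2) * \<tau> j) = 0"
    using jacobi_hyp_poly_ode[OF assms(1), of "\<tau> j" N b] j by (intro linear_factors_ode_at_root)
  moreover have "(\<Sum>l\<in>{0..<N} - {j}. 1 / (\<tau> j - \<tau> l)) = - 2 * (\<Sum>l\<in>{0..<N} - {j}. 1 / (z j - z l))"
    unfolding sum_distrib_left
  proof (rule sum.cong)
    fix l
    assume "l \<in> {0..<N} - {j}"
    then have "z j - z l \<noteq> 0" "z l - z j \<noteq> 0"
      using inj j by (auto dest: inj_onD)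
    then show "1 / (\<tau> j - \<tau> l) = - 2 * (1 / (z j - z l))"
      by (simp add: \<tau>_def field_simps)
  qed simp
  ultimately show ?thesis
    by (simp add: \<tau>_def field_simps power2_eq_square)
qed

lemma jacobi_zeros_prod_one_minus_square:
  assumes "a > -1" "b > -1" and inj: "inj_on z {0..<N}"
    and roots: "\<And>j. j < N \<Longrightarrow> jacobiP N a b (z j) = 0"
  shows "(\<Prod>i<N. 1 - z i ^ 2)
       = 4 ^ N * pochhammer (a + 1) N * pochhammer (b + 1) N / pochhammer (real N + a + b + 1) N ^ 2"
proof -
  define Pa Pb PB where "Pa = pochhammer (a + 1) N" and "Pb = pochhammer (b + 1) N"
    and "PB = pochhammer (real N + a + b + 1) N"
  define \<tau> where "\<tau> l = (1 - z l) / 2" for l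
  have "Pa > 0" "PB > 0"
    using jacobi_pochhammer_pos[OF assms(1,2), of N] by (simp_all add: Pa_def PB_def)
  have factor: "jacobi_hyp_poly N a b = smult ((-1) ^ N * PB / Pa) (\<Prod>l<N. [:- \<tau> l, 1:])"
    using jacobi_hyp_poly_eq_linear_factors[OF assms(1) inj roots]
    by (simp add: jacobi_coeff_top \<tau>_def Pa_def PB_def)
  have "poly (\<Prod>l<N. [:- \<tau> l, 1:]) 0 = (-1) ^ N * (\<Prod>l<N. \<tau> l)"
    by (simp add: poly_prod prod_uminus)
  then have "(-1) ^ N * PB / Pa * ((-1) ^ N * (\<Prod>l<N. \<tau> l)) = 1"
    using poly_jacobi_hyp_poly_0[of N a b] by (simp only: factor poly_smult)
  then have prod_\<tau>: "(\<Prod>l<N. \<tau> l) = Pa / PB"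
    using \<open>Pa > 0\<close> \<open>PB > 0\<close> by (simp add: field_simps flip: power_mult_distrib)
  have "(-1) ^ N * PB / Pa * (\<Prod>l<N. 1 - \<tau> l) = (-1) ^ N * Pb / Pa"
    using poly_jacobi_hyp_poly_1[OF assms(1), of N b] unfolding factor by (simp add: poly_prod Pa_def Pb_def)
  then have prod_1_\<tau>: "(\<Prod>l<N. 1 - \<tau> l) = Pb / PB"
    using \<open>Pa > 0\<close> \<open>PB > 0\<close> by (simp add: field_simps)
  have "(\<Prod>i<N. 1 - z i ^ 2) = (\<Prod>i<N. 4 * (\<tau> i * (1 - \<tau> i)))"
    by (rule prod.cong) (auto simp: \<tau>_def field_simps power2_eq_square)
  also have "\<dots> = 4 ^ N * (\<Prod>l<N. \<tau> l) * (\<Prod>l<N. 1 - \<tau> l)"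
    by (simp add: prod.distrib)
  finally show ?thesis
    unfolding prod_\<tau> prod_1_\<tau> by (simp add: Pa_def Pb_def PB_def power2_eq_square)
qed

lemma jacobi_zeros_not_endpoints:
  assumes "a > -1" "b > -1" and inj: "inj_on z {0..<N}"
    and roots: "\<And>j. j < N \<Longrightarrow> jacobiP N a b (z j) = 0" and j: "j < N"
  shows "z j \<noteq> 1 \<and> z j \<noteq> -1"
proof -
  have "0 < 4 ^ N * pochhammer (a + 1) N * pochhammer (b + 1) N / pochhammer (real N + a + b + 1) N ^ 2"
    using jacobi_pochhammer_pos[OF assms(1,2), of N] by simp
  also have "\<dots> = (\<Prod>i<N. 1 - z i ^ 2)"
    by (rule jacobi_zeros_prod_one_minus_square[OF assms(1,2) inj roots, symmetric])
  finally have "(\<Prod>i<N. 1 - z i ^ 2) \<noteq> 0"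
    by (metis less_irrefl)
  then have "z j ^ 2 \<noteq> 1"
    using j by simp
  then show ?thesis
    by auto
qed

theorem proposition2p7:
  fixes N :: nat and a b :: real and z :: "nat \<Rightarrow> real"
  assumes "a > -1" and "b > -1"
    and "strict_mono_on {0..<N} z"
    and "{x. jacobiP N a b x = 0} = z ` {0..<N}"
  shows "det (S_matrix N a b z) =
     fact N / 2 ^ (3 * N) * (pochhammer (real N + a + b + 1) N) ^ 3
       / (pochhammer (a + 1) N * pochhammer (b + 1) N)"
proof -
  have inj: "inj_on z {0..<N}"
    using assms(3) by (rule strict_mono_on_imp_inj_on)
  have roots: "jacobiP N a b (z j) = 0" if "j < N" for j
    using assms(4) that by auto
  have "det (S_matrix N a b z) * (\<Prod>i<N. 1 - z i ^ 2)
      = fact N * pochhammer (real N + a + b + 1) N / 2 ^ N"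
    using det_S_matrix_mult_prod[OF inj] jacobi_zeros_not_endpoints[OF assms(1,2) inj roots]
      jacobi_zeros_stieltjes[OF assms(1,2) inj roots] by blast
  then have "det (S_matrix N a b z) * (4 ^ N * pochhammer (a + 1) N * pochhammer (b + 1) N
      / pochhammer (real N + a + b + 1) N ^ 2) = fact N * pochhammer (real N + a + b + 1) N / 2 ^ N"
    by (simp only: jacobi_zeros_prod_one_minus_square[OF assms(1,2) inj roots])
  moreover have "(2::real) ^ (3 * N) = 2 ^ N * 4 ^ N"
    by (simp add: power_mult flip: power_mult_distrib)
  ultimately show ?thesis
    using jacobi_pochhammer_pos[OF assms(1,2), of N]
    by (simp add: field_simps power2_eq_square power3_eq_cube)
qed

end
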